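(* Let $0<\Omega\le1/2$ and let $F\in\mathcal{F}_0$ be supported on a finite set $\Sigma\subset\mathbb{R}\setminus\{0\}$. Then in the noiseless setting $m=1$ sample suffices for exact recovery of the sparsity pattern of any vector from the source $\mathcal{X}(\Omega,F)$ (all of whose nonzero entries lie in $\Sigma$), and the noiseless sampling rate distortion function of $\mathcal{X}(\Omega,F)$ is $\rho_0(\alpha)=0$ for all $\alpha\in[0,1]$.
   Context: Setup. For each $n$, let $k=\lfloor \Omega n\rfloor$ and $m=\lceil \rho n\rceil$. For $\mathbf{x}\in\mathbb{R}^n$ its sparsity pattern is $\mathbf{s}=\{i: x_i\neq 0\}$. One observes $\mathbf{Y}=\mathbf{A}\mathbf{x}$ (noiseless setting), where $\mathbf{A}$ is a random $m\times n$ real matrix, independent of $\mathbf{x}$, with $\mathbb{E}[\mathrm{tr}(\mathbf{A}\mathbf{A}^T)]=m$. An estimator is any map $\hat{\mathbf{s}}(\mathbf{Y},\mathbf{A},k)$ returning a subset of $\{1,\dots,n\}$ of size $k$; it may use knowledge of the source. The distortion is $d(\mathbf{s},\hat{\mathbf{s}})=1-|\mathbf{s}\cap\hat{\mathbf{s}}|/|\mathbf{s}|$. A vector source is a collection of sequences $(\mathbf{x}^n)$, $\mathbf{x}^n\in\mathbb{R}^n$; $(\rho,\alpha)$ is achievable if for each $n$ there exist an estimator and a random $\lceil\rho n\rceil\times n$ sampling matrix such that for every sequence in the source $\Pr\{d(\mathbf{s}(\mathbf{x}^n),\hat{\mathbf{s}})>\alpha\}\to0$; $\rho_0(\alpha)$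 is the infimum of achievable $\rho\ge0$. $\mathcal{F}_0$ is the set of distribution functions $F$ of real random variables $X$ with $\mathbb{E}X^2<\infty$ and $\Pr\{X=0\}=0$. $\mathcal{X}(\Omega)$ is the set of sequences with $\mathbf{x}^n$ having exactly $\lfloor\Omega n\rfloor$ nonzero entries; $\mathcal{X}(\Omega,F)$ is the set of sequences in $\mathcal{X}(\Omega)$ for which $\sup_{x}|F_{\mathbf{x}^n}(x)-F(x)|\to0$, where $F_{\mathbf{x}^n}(x)=\frac1k\sum_{i\in\mathbf{s}}\mathbf{1}(x_i\le x)$ is the empirical distribution of the nonzero entries. *)

theory Defs
  imports "HOL-Probability.Probability"
begin

text \<open>Vectors in R^n are functions nat => real vanishing outside indices below n;
  m x n matrices are functions nat => nat => real (entries outside the range are zero).\<close>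

definition k_of :: "real \<Rightarrow> nat \<Rightarrow> nat" where
  "k_of Om n = nat \<lfloor>Om * real n\<rfloor>"

definition m_of :: "real \<Rightarrow> nat \<Rightarrow> nat" where
  "m_of rho n = nat \<lceil>rho * real n\<rceil>"

definition sparsity_pattern :: "nat \<Rightarrow> (nat \<Rightarrow> real) \<Rightarrow> nat set" where
  "sparsity_pattern n x = {i. i < n \<and> x i \<noteq> 0}"

definition mat_vec :: "nat \<Rightarrow> nat \<Rightarrow> (nat \<Rightarrow> nat \<Rightarrow> real) \<Rightarrow> (nat \<Rightarrow> real) \<Rightarrow> (nat \<Rightarrow> real)" where
  "mat_vec m n A x = (\<lambda>i. if i < m then (\<Sum>j<n. A i j * x j) else 0)"

definition distortion :: "nat set \<Rightarrow> nat set \<Rightarrow> real" where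
  "distortion s s' = 1 - real (card (s \<inter> s')) / real (card s)"

definition sampling_matrix :: "nat \<Rightarrow> nat \<Rightarrow> (nat \<Rightarrow> nat \<Rightarrow> real) measure \<Rightarrow> bool" where
  "sampling_matrix m n M \<longleftrightarrow>
     prob_space M \<and>
     space M \<subseteq> {A. \<forall>i j. (m \<le> i \<or> n \<le> j) \<longrightarrow> A i j = 0} \<and>
     (\<lambda>A. ennreal (\<Sum>i<m. \<Sum>j<n. (A i j)\<^sup>2)) \<in> borel_measurable M \<and>
     (\<integral>\<^sup>+ A. ennreal (\<Sum>i<m. \<Sum>j<n. (A i j)\<^sup>2) \<partial>M) = of_nat m"

definition valid_estimator ::
  "nat \<Rightarrow> nat \<Rightarrow> ((nat \<Rightarrow> real) \<Rightarrow> (nat \<Rightarrow> nat \<Rightarrow> real) \<Rightarrow> nat \<Rightarrow> nat set) \<Rightarrow> bool" where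
  "valid_estimator n k est \<longleftrightarrow> (\<forall>Y A. est Y A k \<subseteq> {..<n} \<and> card (est Y A k) = k)"

text \<open>Sources are sets of sequences (x^n), x^n in R^n.\<close>
definition achievable ::
  "real \<Rightarrow> (nat \<Rightarrow> nat \<Rightarrow> real) set \<Rightarrow> real \<Rightarrow> real \<Rightarrow> bool" where
  "achievable Om S rho \<alpha> \<longleftrightarrow>
     (\<exists>Ms ests. (\<forall>n. sampling_matrix (m_of rho n) n (Ms n) \<and>
                      valid_estimator n (k_of Om n) (ests n)) \<and>
       (\<forall>xs\<in>S.
          (\<forall>n. {A \<in> space (Ms n). distortion (sparsity_pattern n (xs n))
                 (ests n (mat_vec (m_of rho n) n A (xs n)) A (k_of Om n)) > \<alpha>} \<in> sets (Ms n)) \<and>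
          (\<lambda>n. measure (Ms n) {A \<in> space (Ms n). distortion (sparsity_pattern n (xs n))
                 (ests n (mat_vec (m_of rho n) n A (xs n)) A (k_of Om n)) > \<alpha>})
             \<longlonglongrightarrow> 0))"

definition rho0 :: "real \<Rightarrow> (nat \<Rightarrow> nat \<Rightarrow> real) set \<Rightarrow> real \<Rightarrow> real" where
  "rho0 Om S \<alpha> = Inf {rho. rho \<ge> 0 \<and> achievable Om S rho \<alpha>}"

definition F0 :: "(real \<Rightarrow> real) set" where
  "F0 = {F. \<exists>\<mu>. real_distribution \<mu> \<and> F = cdf \<mu> \<and>
              integrable \<mu> (\<lambda>x. x\<^sup>2) \<and> measure \<mu> {0} = 0}"

definition supported_on :: "(real \<Rightarrow> real) \<Rightarrow> real set \<Rightarrow> bool" where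
  "supported_on F Sig \<longleftrightarrow> (\<exists>\<mu>. real_distribution \<mu> \<and> F = cdf \<mu> \<and> measure \<mu> Sig = 1)"

definition source_X :: "real \<Rightarrow> (nat \<Rightarrow> nat \<Rightarrow> real) set" where
  "source_X Om = {xs. \<forall>n. (\<forall>i\<ge>n. xs n i = 0) \<and> card (sparsity_pattern n (xs n)) = k_of Om n}"

definition empirical_cdf :: "nat \<Rightarrow> (nat \<Rightarrow> real) \<Rightarrow> real \<Rightarrow> real" where
  "empirical_cdf n x t =
     real (card {i \<in> sparsity_pattern n x. x i \<le> t}) / real (card (sparsity_pattern n x))"

definition source_XF :: "real \<Rightarrow> (real \<Rightarrow> real) \<Rightarrow> (nat \<Rightarrow> nat \<Rightarrow> real) set" where
  "source_XF Om F = {xs \<in> source_X Om.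
     (\<lambda>n. SUP t. \<bar>empirical_cdf n (xs n) t - F t\<bar>) \<longlonglongrightarrow> 0}"

end

theory Submission imports Defs begin

text \<open>Over a finite alphabet \<open>T\<close> there is a linear form \<open>L x = \<Sum>i<n. a i * x i\<close> that is
  injective on the vectors with entries in \<open>T\<close>: the coefficients are chosen one at a time, the
  new one avoiding the finitely many ratios \<open>(L y - L x) / (s - t)\<close> that would produce a
  collision. Scaled to unit norm, \<open>a\<close> is a single sampling row whose one noiseless measurement
  determines the vector, hence its sparsity pattern. Since this works for every \<open>n\<close>, every
  positive rate achieves zero distortion.\<close>

definition alphabet_vectors :: "'a::zero set \<Rightarrow> nat \<Rightarrow> (nat \<Rightarrow> 'a) set" where
  "alphabet_vectors T n = {x. (\<forall>i<n. x i \<in> T) \<and> (\<forall>i\<ge>n. x i = 0)}"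

lemma finite_alphabet_vectors:
  assumes "finite T"
  shows "finite (alphabet_vectors T n)"
proof -
  have "alphabet_vectors T n \<subseteq> (\<lambda>f i. if i < n then f i else 0) ` (PiE {..<n} (\<lambda>_. T))"
  proof
    fix x assume x: "x \<in> alphabet_vectors T n"
    then have "x = (\<lambda>i. if i < n then restrict x {..<n} i else 0)"
      and "restrict x {..<n} \<in> PiE {..<n} (\<lambda>_. T)"
      by (auto simp: alphabet_vectors_def)
    then show "x \<in> (\<lambda>f i. if i < n then f i else 0) ` (PiE {..<n} (\<lambda>_. T))"
      by blast
  qed
  moreover have "finite (PiE {..<n} (\<lambda>_. T))"
    using assms by (intro finite_PiE) auto
  ultimately show ?thesis
    by (meson finite_imageI finite_subset)
qed

lemma exists_injective_linear_form:
  fixes T :: "'a::field_char_0 set"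
  assumes "finite T"
  shows "\<exists>a. (\<forall>i<n. a i \<noteq> 0) \<and> inj_on (\<lambda>x. \<Sum>i<n. a i * x i) (alphabet_vectors T n)"
proof (induction n)
  case 0
  have "alphabet_vectors T 0 \<subseteq> {\<lambda>_. 0}"
    by (auto simp: alphabet_vectors_def)
  then show ?case
    by (auto intro: inj_on_subset)
next
  case (Suc n)
  then obtain a where "\<forall>i<n. a i \<noteq> 0"
    and inj: "inj_on (\<lambda>x. \<Sum>i<n. a i * x i) (alphabet_vectors T n)"
    by blast
  define L where "L x = (\<Sum>i<n. a i * x i)" for x :: "nat \<Rightarrow> 'a"
  define V where "V = alphabet_vectors T n"
  define Bad where "Bad = insert 0 ((\<lambda>(x, y, s, t). (L y - L x) / (s - t)) ` (V \<times> V \<times> T \<times> T))"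
  have "finite Bad"
    unfolding Bad_def V_def using assms by (auto intro: finite_alphabet_vectors)
  then obtain c where c: "c \<notin> Bad"
    using ex_new_if_finite[OF infinite_UNIV_char_0] by blast
  define a' where "a' = a(n := c)"
  have L_Suc: "(\<Sum>i<Suc n. a' i * x i) = L (x(n := 0)) + c * x n" for x
  proof -
    have "(\<Sum>i<n. a' i * x i) = L (x(n := 0))"
      unfolding L_def a'_def by (intro sum.cong) auto
    then show ?thesis by (simp add: a'_def)
  qed
  have "inj_on (\<lambda>x. \<Sum>i<Suc n. a' i * x i) (alphabet_vectors T (Suc n))"
  proof (rule inj_onI)
    fix x y
    assume x: "x \<in> alphabet_vectors T (Suc n)" and y: "y \<in> alphabet_vectors T (Suc n)"
      and "(\<Sum>i<Suc n. a' i * x i) = (\<Sum>i<Suc n. a' i * y i)"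
    then have eq: "L (x(n := 0)) + c * x n = L (y(n := 0)) + c * y n"
      by (simp only: L_Suc)
    have x': "x(n := 0) \<in> alphabet_vectors T n" and y': "y(n := 0) \<in> alphabet_vectors T n"
      using x y by (auto simp: alphabet_vectors_def)
    show "x = y"
    proof (cases "x n = y n")
      case True
      with eq have "L (x(n := 0)) = L (y(n := 0))" by simp
      then have "x(n := 0) = y(n := 0)"
        using inj_onD[OF inj _ x' y'] unfolding L_def by blast
      with True show ?thesis
        by (metis fun_upd_idem_iff fun_upd_upd)
    next
      case False
      then have "c = (L (y(n := 0)) - L (x(n := 0))) / (x n - y n)"
        using eq by (simp add: field_simps)
      moreover have "x(n := 0) \<in> V" "y(n := 0) \<in> V" "x n \<in> T" "y n \<in> T"
        using x' y' x y by (auto simp: V_def alphabet_vectors_def)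
      ultimately have "c \<in> Bad"
        unfolding Bad_def by (intro insertI2 image_eqI[where x = "(x(n:=0), y(n:=0), x n, y n)"]) auto
      with c show ?thesis by blast
    qed
  qed
  moreover have "\<forall>i<Suc n. a' i \<noteq> 0"
    using \<open>\<forall>i<n. a i \<noteq> 0\<close> c by (auto simp: a'_def Bad_def less_Suc_eq)
  ultimately show ?case by blast
qed

lemma exists_unit_injective_linear_form:
  fixes T :: "real set"
  assumes "finite T" and "0 < n"
  shows "\<exists>a. (\<Sum>j<n. (a j)\<^sup>2) = 1 \<and> inj_on (\<lambda>x. \<Sum>j<n. a j * x j) (alphabet_vectors T n)"
proof -
  obtain a where "\<forall>i<n. a i \<noteq> 0"
    and inj: "inj_on (\<lambda>x. \<Sum>i<n. a i * x i) (alphabet_vectors T n)"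
    using exists_injective_linear_form[OF assms(1)] by blast
  define r where "r = (\<Sum>j<n. (a j)\<^sup>2)"
  have "0 < (a 0)\<^sup>2" "(a 0)\<^sup>2 \<le> r"
    using \<open>\<forall>i<n. a i \<noteq> 0\<close> assms(2) unfolding r_def by (auto intro: member_le_sum)
  then have "0 < r" by linarith
  define b where "b j = a j / sqrt r" for j
  have "(\<Sum>j<n. (b j)\<^sup>2) = (\<Sum>j<n. (a j)\<^sup>2) / r"
    using \<open>0 < r\<close> by (simp add: b_def power_divide sum_divide_distrib)
  also have "\<dots> = 1"
    using \<open>0 < r\<close> by (simp add: r_def)
  finally have "(\<Sum>j<n. (b j)\<^sup>2) = 1" .
  moreover have "(\<Sum>j<n. b j * x j) = (\<Sum>j<n. a j * x j) / sqrt r" for x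
    by (simp add: b_def sum_divide_distrib)
  then have "inj_on (\<lambda>x. \<Sum>j<n. b j * x j) (alphabet_vectors T n)"
    using inj \<open>0 < r\<close> by (simp add: inj_on_def)
  ultimately show ?thesis by blast
qed

definition repeated_row :: "nat \<Rightarrow> nat \<Rightarrow> (nat \<Rightarrow> real) \<Rightarrow> nat \<Rightarrow> nat \<Rightarrow> real" where
  "repeated_row m n a = (\<lambda>i j. if i < m \<and> j < n then a j else 0)"

lemma mat_vec_repeated_row:
  "0 < m \<Longrightarrow> mat_vec m n (repeated_row m n a) x 0 = (\<Sum>j<n. a j * x j)"
  by (simp add: mat_vec_def repeated_row_def)

lemma sampling_matrix_return:
  assumes "\<forall>i j. m \<le> i \<or> n \<le> j \<longrightarrow> A i j = 0" and "(\<Sum>i<m. \<Sum>j<n. (A i j)\<^sup>2) = m"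
  shows "sampling_matrix m n (return (count_space {A}) A)"
  unfolding sampling_matrix_def
proof (intro conjI)
  show "prob_space (return (count_space {A}) A)"
    by (rule prob_space_return) simp
qed (use assms in \<open>auto simp: measurable_cong_sets[OF sets_return refl] nn_integral_return
                               ennreal_of_nat_eq_real_of_nat\<close>)

lemma sampling_matrix_repeated_row:
  assumes "(\<Sum>j<n. (a j)\<^sup>2) = 1 \<or> m = 0"
  shows "sampling_matrix m n (return (count_space {repeated_row m n a}) (repeated_row m n a))"
proof (rule sampling_matrix_return)
  have "(\<Sum>i<m. \<Sum>j<n. (repeated_row m n a i j)\<^sup>2) = (\<Sum>i<m. \<Sum>j<n. (a j)\<^sup>2)"
    unfolding repeated_row_def by (intro sum.cong) auto
  then show "(\<Sum>i<m. \<Sum>j<n. (repeated_row m n a i j)\<^sup>2) = m"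
    using assms by auto
qed (simp add: repeated_row_def)

definition decoder_candidates ::
  "(nat \<Rightarrow> real) \<Rightarrow> (nat \<Rightarrow> real) set \<Rightarrow> nat \<Rightarrow> (nat \<Rightarrow> real) \<Rightarrow> nat \<Rightarrow> (nat \<Rightarrow> real) set"
where
  "decoder_candidates a V n Y k =
     {x \<in> V. card (sparsity_pattern n x) = k \<and> (\<Sum>j<n. a j * x j) = Y 0}"

text \<open>The decoder uses only the first sample \<open>Y 0\<close> and ignores the matrix argument, which is
  fixed in advance; \<open>{..<k}\<close> is an arbitrary fallback answer of the right size.\<close>
definition linear_decoder ::
  "(nat \<Rightarrow> real) \<Rightarrow> (nat \<Rightarrow> real) set \<Rightarrow> nat \<Rightarrow> (nat \<Rightarrow> real) \<Rightarrow> (nat \<Rightarrow> nat \<Rightarrow> real) \<Rightarrow> nat \<Rightarrow> nat set"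
where
  "linear_decoder a V n Y A k =
     (if decoder_candidates a V n Y k = {} then {..<k}
      else sparsity_pattern n (SOME x. x \<in> decoder_candidates a V n Y k))"

lemma valid_estimator_linear_decoder:
  assumes "k \<le> n"
  shows "valid_estimator n k (linear_decoder a V n)"
proof -
  have "sparsity_pattern n x \<subseteq> {..<n}" for x
    by (auto simp: sparsity_pattern_def)
  moreover have "card (sparsity_pattern n (SOME x. x \<in> decoder_candidates a V n Y k)) = k"
    if "decoder_candidates a V n Y k \<noteq> {}" for Y
    using some_in_eq[of "decoder_candidates a V n Y k"] that by (auto simp: decoder_candidates_def)
  ultimately show ?thesis
    using assms by (auto simp: valid_estimator_def linear_decoder_def)
qed

lemma linear_decoder_correct:
  assumes "inj_on (\<lambda>x. \<Sum>j<n. a j * x j) V" and "x \<in> V"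
    and "card (sparsity_pattern n x) = k" and "Y 0 = (\<Sum>j<n. a j * x j)"
  shows "linear_decoder a V n Y A k = sparsity_pattern n x"
proof -
  let ?C = "decoder_candidates a V n Y k"
  have "x \<in> ?C"
    using assms(2-4) by (simp add: decoder_candidates_def)
  define y where "y = (SOME y. y \<in> ?C)"
  have "y \<in> ?C"
    using \<open>x \<in> ?C\<close> unfolding y_def by (metis someI)
  then have "y = x"
    using \<open>x \<in> ?C\<close> inj_onD[OF assms(1)] by (auto simp: decoder_candidates_def)
  with \<open>x \<in> ?C\<close> show ?thesis
    by (auto simp: linear_decoder_def y_def)
qed

definition exact_recovery_scheme ::
  "nat \<Rightarrow> nat \<Rightarrow> nat \<Rightarrow> real set \<Rightarrow> (nat \<Rightarrow> nat \<Rightarrow> real) \<Rightarrow>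
    ((nat \<Rightarrow> real) \<Rightarrow> (nat \<Rightarrow> nat \<Rightarrow> real) \<Rightarrow> nat \<Rightarrow> nat set) \<Rightarrow> bool"
where
  "exact_recovery_scheme m n k T A0 est \<longleftrightarrow>
     sampling_matrix m n (return (count_space {A0}) A0) \<and> valid_estimator n k est \<and>
     (0 < m \<longrightarrow> (\<forall>x\<in>alphabet_vectors T n. card (sparsity_pattern n x) = k \<longrightarrow>
        est (mat_vec m n A0 x) A0 k = sparsity_pattern n x))"

lemma exists_exact_recovery_scheme:
  fixes T :: "real set"
  assumes "finite T" and "k \<le> n" and "n = 0 \<longrightarrow> m = 0"
  shows "\<exists>A0 est. exact_recovery_scheme m n k T A0 est"
proof -
  obtain a where unit: "(\<Sum>j<n. (a j)\<^sup>2) = 1 \<or> m = 0"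
    and inj: "inj_on (\<lambda>x. \<Sum>j<n. a j * x j) (alphabet_vectors T n)"
  proof (cases "n = 0")
    case True
    with assms(3) that show ?thesis
      by (simp add: alphabet_vectors_def inj_on_def fun_eq_iff)
  next
    case False
    with that show ?thesis
      using exists_unit_injective_linear_form[OF assms(1)] by blast
  qed
  have "sampling_matrix m n (return (count_space {repeated_row m n a}) (repeated_row m n a))"
    using unit by (rule sampling_matrix_repeated_row)
  moreover have "valid_estimator n k (linear_decoder a (alphabet_vectors T n) n)"
    using assms(2) by (rule valid_estimator_linear_decoder)
  moreover have "linear_decoder a (alphabet_vectors T n) n (mat_vec m n (repeated_row m n a) x)
      (repeated_row m n a) k = sparsity_pattern n x"
    if "0 < m" "x \<in> alphabet_vectors T n" "card (sparsity_pattern n x) = k" for x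
    using linear_decoder_correct[OF inj that(2,3)] mat_vec_repeated_row[OF that(1)] by simp
  ultimately show ?thesis
    unfolding exact_recovery_scheme_def by blast
qed

lemma k_of_le:
  assumes "Om \<le> 1"
  shows "k_of Om n \<le> n"
proof -
  have "Om * real n \<le> real n"
    using mult_right_mono[OF assms, of "real n"] by simp
  then show ?thesis
    by (simp add: k_of_def nat_le_iff floor_le_iff)
qed

lemma eventually_k_of_pos:
  assumes "0 < Om"
  shows "\<forall>\<^sub>F n in sequentially. 0 < k_of Om n"
proof -
  have "filterlim (\<lambda>n. Om * real n) at_top sequentially"
    by (rule filterlim_tendsto_pos_mult_at_top[OF tendsto_const assms filterlim_real_sequentially])
  then have "\<forall>\<^sub>F n in sequentially. 1 \<le> Om * real n"
    by (simp add: filterlim_at_top)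
  then show ?thesis
    by eventually_elim (simp add: k_of_def)
qed

lemma m_of_pos: "0 < rho \<Longrightarrow> 0 < n \<Longrightarrow> 0 < m_of rho n"
  by (simp add: m_of_def)

lemma achievable_finite_alphabet:
  fixes T :: "real set"
  assumes "0 < Om" "Om \<le> 1" "finite T" "0 < rho" "0 \<le> \<alpha>"
    and source: "S \<subseteq> {xs. \<forall>n. xs n \<in> alphabet_vectors T n \<and>
                               card (sparsity_pattern n (xs n)) = k_of Om n}"
  shows "achievable Om S rho \<alpha>"
proof -
  have "\<forall>n. \<exists>A0 est. exact_recovery_scheme (m_of rho n) n (k_of Om n) T A0 est"
    using exists_exact_recovery_scheme[OF assms(3) k_of_le[OF assms(2)]] by (simp add: m_of_def)
  from choice[OF this] obtain A0
    where "\<forall>n. \<exists>est. exact_recovery_scheme (m_of rho n) n (k_of Om n) T (A0 n) est"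
    by blast
  from choice[OF this] obtain est
    where scheme: "\<And>n. exact_recovery_scheme (m_of rho n) n (k_of Om n) T (A0 n) (est n)"
    by blast
  define M where "M n = return (count_space {A0 n}) (A0 n)" for n
  define bad where "bad xs n = {A \<in> space (M n). \<alpha> < distortion (sparsity_pattern n (xs n))
    (est n (mat_vec (m_of rho n) n A (xs n)) A (k_of Om n))}" for xs n
  have "(\<lambda>n. measure (M n) (bad xs n)) \<longlonglongrightarrow> 0" if "xs \<in> S" for xs
  proof (rule tendsto_eventually)
    show "\<forall>\<^sub>F n in sequentially. measure (M n) (bad xs n) = 0"
      using eventually_k_of_pos[OF assms(1)]
    proof eventually_elim
      case (elim n)
      have x: "xs n \<in> alphabet_vectors T n" "card (sparsity_pattern n (xs n)) = k_of Om n"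
        using source that by auto
      with elim have "0 < n"
        using k_of_le[OF assms(2), of n] by linarith
      then have "est n (mat_vec (m_of rho n) n (A0 n) (xs n)) (A0 n) (k_of Om n) =
          sparsity_pattern n (xs n)"
        using scheme[of n] x m_of_pos[OF assms(4)] by (simp add: exact_recovery_scheme_def)
      then have "bad xs n = {}"
        using elim x assms(5) by (simp add: bad_def M_def distortion_def)
      then show ?case by simp
    qed
  qed
  moreover have "bad xs n \<in> sets (M n)" for xs n
    by (auto simp: bad_def M_def)
  moreover have "sampling_matrix (m_of rho n) n (M n) \<and> valid_estimator n (k_of Om n) (est n)" for n
    using scheme[of n] by (simp add: exact_recovery_scheme_def M_def)
  ultimately show ?thesis
    unfolding achievable_def bad_def by blast
qed

lemma Inf_nonneg_eq_0:
  assumes "\<And>r. 0 < r \<Longrightarrow> P r"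
  shows "Inf {r::real. 0 \<le> r \<and> P r} = 0"
proof -
  define R where "R = {r::real. 0 \<le> r \<and> P r}"
  have "bdd_below R"
    by (auto simp: R_def bdd_below_def)
  have "1 \<in> R"
    using assms[of 1] by (simp add: R_def)
  then have "R \<noteq> {}"
    by blast
  then have "0 \<le> Inf R"
    by (rule cInf_greatest) (simp add: R_def)
  moreover have "Inf R \<le> 0"
  proof (rule field_le_epsilon)
    fix e :: real
    assume "0 < e"
    then have "e \<in> R"
      using assms by (simp add: R_def)
    then show "Inf R \<le> 0 + e"
      using cInf_lower[OF _ \<open>bdd_below R\<close>] by simp
  qed
  ultimately show ?thesis
    by (simp add: R_def)
qed

theorem proposition2:
  fixes Om :: real and F :: "real \<Rightarrow> real" and Sig :: "real set"
  assumes "0 < Om" and "Om \<le> 1/2"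
    and "F \<in> F0" and "finite Sig" and "0 \<notin> Sig" and "supported_on F Sig"
  shows "(\<forall>n\<ge>1. \<exists>M est. sampling_matrix 1 n M \<and> valid_estimator n (k_of Om n) est \<and>
            (\<forall>xs \<in> source_XF Om F \<inter> {xs. \<forall>n i. xs n i \<noteq> 0 \<longrightarrow> xs n i \<in> Sig}.
               AE A in M. est (mat_vec 1 n A (xs n)) A (k_of Om n) = sparsity_pattern n (xs n)))
       \<and> (\<forall>\<alpha>\<in>{0..1}. rho0 Om (source_XF Om F \<inter> {xs. \<forall>n i. xs n i \<noteq> 0 \<longrightarrow> xs n i \<in> Sig}) \<alpha> = 0)"
proof -
  let ?X = "source_XF Om F \<inter> {xs. \<forall>n i. xs n i \<noteq> 0 \<longrightarrow> xs n i \<in> Sig}"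
  \<comment> \<open>Only the finiteness of \<open>Sig\<close> matters.\<close>
  have fin: "finite (insert 0 Sig)" and "Om \<le> 1"
    using assms(2,4) by auto
  have source: "?X \<subseteq> {xs. \<forall>n. xs n \<in> alphabet_vectors (insert 0 Sig) n \<and>
      card (sparsity_pattern n (xs n)) = k_of Om n}"
    by (auto simp: source_XF_def source_X_def alphabet_vectors_def)
  have "\<exists>M est. sampling_matrix 1 n M \<and> valid_estimator n (k_of Om n) est \<and>
      (\<forall>xs \<in> ?X. AE A in M. est (mat_vec 1 n A (xs n)) A (k_of Om n) = sparsity_pattern n (xs n))"
    if n: "1 \<le> n" for n
  proof -
    obtain A0 est where scheme: "exact_recovery_scheme 1 n (k_of Om n) (insert 0 Sig) A0 est"
      using exists_exact_recovery_scheme[OF fin k_of_le[OF \<open>Om \<le> 1\<close>], of n 1] n by auto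
    have "AE A in return (count_space {A0}) A0.
        est (mat_vec 1 n A (xs n)) A (k_of Om n) = sparsity_pattern n (xs n)" if "xs \<in> ?X" for xs
      using scheme source that by (intro AE_I2) (auto simp: exact_recovery_scheme_def)
    moreover have "sampling_matrix 1 n (return (count_space {A0}) A0)" "valid_estimator n (k_of Om n) est"
      using scheme by (simp_all add: exact_recovery_scheme_def)
    ultimately show ?thesis
      by (intro exI[of _ "return (count_space {A0}) A0"] exI[of _ est]) simp
  qed
  moreover have "rho0 Om ?X \<alpha> = 0" if "\<alpha> \<in> {0..1}" for \<alpha>
    unfolding rho0_def
  proof (rule Inf_nonneg_eq_0)
    show "achievable Om ?X rho \<alpha>" if "0 < rho" for rho
      using achievable_finite_alphabet[OF assms(1) \<open>Om \<le> 1\<close> fin that _ source] \<open>\<alpha> \<in> {0..1}\<close>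
      by simp
  qed
  ultimately show ?thesis by blast
qed

end
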